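(* As formal power series in variables $p_1,p_2,\dots$, $$\sum_{\ell(\mu)\ge2}\frac{(|\mu|+\ell(\mu)-3)!\,(\ell(\mu)-1)\,p_\mu}{(|\mu|-1)!\,z_\mu}=\frac12\left(\sum_{\mu\ne\emptyset}\frac{(|\mu|+\ell(\mu)-2)!\,p_\mu}{(|\mu|-1)!\,z_\mu}\right)^2,$$ where the sums are over partitions $\mu$.
   Context: A partition is $\mu=(\mu_1\ge\cdots\ge\mu_k>0)$ with $|\mu|=\sum\mu_i$ and $\ell(\mu)=k$. $m_j(\mu)$ is the number of parts equal to $j$, $z_\mu=\prod_jm_j(\mu)!\,j^{m_j(\mu)}$, and $p_\mu=\prod_jp_j^{m_j(\mu)}$. *)

theory Defs
  imports Complex_Main "HOL-Library.Multiset"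
begin

text \<open>Partitions are finite multisets of positive integers (the parts).
A formal power series in the variables p_1, p_2, ... is represented by its
coefficient function: the coefficient of the monomial p_mu for every multiset mu
of natural numbers (the coefficients at multisets containing 0, which are not
partitions, are 0 for all series considered).\<close>

definition is_partition :: "nat multiset \<Rightarrow> bool" where
  "is_partition \<mu> \<longleftrightarrow> 0 \<notin># \<mu>"

definition psize :: "nat multiset \<Rightarrow> nat" where
  "psize \<mu> = sum_mset \<mu>"

definition plen :: "nat multiset \<Rightarrow> nat" where
  "plen \<mu> = size \<mu>"

definition zee :: "nat multiset \<Rightarrow> nat" where
  "zee \<mu> = (\<Prod>j\<in>set_mset \<mu>. fact (count \<mu> j) * j ^ count \<mu> j)"

text \<open>Product of formal power series in p_1,p_2,...: since p_nu * p_rho = p_(nu+rho)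
(multiset union), the coefficient of p_mu in f*g is the sum over splittings mu = nu + rho.\<close>

definition mps_mult :: "(nat multiset \<Rightarrow> real) \<Rightarrow> (nat multiset \<Rightarrow> real) \<Rightarrow> nat multiset \<Rightarrow> real" where
  "mps_mult f g \<mu> = (\<Sum>\<nu>\<in>{\<nu>. \<nu> \<subseteq># \<mu>}. f \<nu> * g (\<mu> - \<nu>))"

end

theory Submission
  imports Defs
begin

text \<open>Write x^(k) for the rising factorial x (x+1) \<cdots> (x+k-1) and, for a partition \<nu>,
w(\<nu>) = |\<nu>|^(\<ell>(\<nu>)-1) = (|\<nu>| + \<ell>(\<nu>) - 2)! / (|\<nu>| - 1)!, so that the series on the right
is \<Sum> w(\<nu>) p_\<nu> / z_\<nu>. Since z_\<nu> z_(\<mu>-\<nu>) C(\<mu>,\<nu>) = z_\<mu>, where C(\<mu>,\<nu>) is the product of the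
binomial coefficients of the multiplicities, the coefficient of p_\<mu> / z_\<mu> in its square is the
binomial convolution \<Sum>_(\<nu> \<subseteq> \<mu>) C(\<mu>,\<nu>) w(\<nu>) w(\<mu>-\<nu>).

This convolution is evaluated with the Abel-type polynomials A_\<nu>(a) = a (a + |\<nu>| + 1)^(\<ell>(\<nu>)-1),
A_\<emptyset> = 1, which satisfy \<Sum>_\<nu> C(\<mu>,\<nu>) A_\<nu>(a) A_(\<mu>-\<nu>)(b) = A_\<mu>(a + b) for integers a:
by induction on \<ell>(\<mu>), both sides obey the difference equation
A_\<mu>(a + 1) - A_\<mu>(a) = \<Sum>_j m_j(\<mu>) A_(\<mu>-j)(a + j + 1), and they agree at a = 0.
As A_\<nu>(-1) = -w(\<nu>) for \<nu> \<noteq> \<emptyset>, the choice a = b = -1 gives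
\<Sum>_\<nu> C(\<mu>,\<nu>) w(\<nu>) w(\<mu>-\<nu>) = A_\<mu>(-2) + 2 w(\<mu>) = 2 (\<ell>(\<mu>) - 1) |\<mu>|^(\<ell>(\<mu>)-2),
twice the coefficient on the left.\<close>

lemma finite_submultisets: "finite {\<nu>. \<nu> \<subseteq># (\<mu> :: 'a multiset)}"
proof (rule finite_subset)
  show "{\<nu>. \<nu> \<subseteq># \<mu>} \<subseteq> mset ` {xs. set xs \<subseteq> set_mset \<mu> \<and> length xs \<le> size \<mu>}"
  proof
    fix \<nu> assume "\<nu> \<in> {\<nu>. \<nu> \<subseteq># \<mu>}"
    moreover obtain xs where "\<nu> = mset xs" by (metis ex_mset)
    ultimately show "\<nu> \<in> mset ` {xs. set xs \<subseteq> set_mset \<mu> \<and> length xs \<le> size \<mu>}"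
      by (metis (mono_tags, lifting) image_eqI mem_Collect_eq set_mset_mono set_mset_mset
          size_mset size_mset_mono)
  qed
qed (simp add: finite_lists_length_le)

lemma sum_mset_conv_sum_count:
  "(\<Sum>x\<in>#M. f x) = (\<Sum>x\<in>set_mset M. of_nat (count M x) * (f x :: 'b :: comm_semiring_1))"
proof (induction M)
  case (add y M)
  have "(\<Sum>x\<in>set_mset (add_mset y M). of_nat (count (add_mset y M) x) * f x)
      = (\<Sum>x\<in>insert y (set_mset M). of_nat (count M x) * f x + (if x = y then f x else 0))"
    by (intro sum.cong) (auto simp: algebra_simps)
  also have "\<dots> = (\<Sum>x\<in>insert y (set_mset M). of_nat (count M x) * f x) + f y"
    by (simp add: sum.distrib)
  also have "(\<Sum>x\<in>insert y (set_mset M). of_nat (count M x) * f x)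
      = (\<Sum>x\<in>set_mset M. of_nat (count M x) * f x)"
    by (rule sum.mono_neutral_right) (auto simp: not_in_iff)
  finally show ?case
    using add by (simp add: add.commute)
qed simp

lemma sum_mset_pos: "0 \<notin># \<nu> \<Longrightarrow> \<nu> \<noteq> {#} \<Longrightarrow> sum_mset \<nu> > (0 :: nat)"
  by (metis gr0I multiset_nonemptyE sum_mset_0_iff)

definition mset_choose :: "'a multiset \<Rightarrow> 'a multiset \<Rightarrow> nat" where
  "mset_choose \<mu> \<nu> = (\<Prod>x\<in>set_mset \<mu>. count \<mu> x choose count \<nu> x)"

lemma mset_choose_empty [simp]: "mset_choose \<mu> {#} = 1"
  by (simp add: mset_choose_def)

lemma mset_choose_self [simp]: "mset_choose \<mu> \<mu> = 1"
  by (simp add: mset_choose_def)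

lemma mset_choose_conv_prod:
  assumes "\<nu> \<subseteq># \<mu>" "finite A" "set_mset \<mu> \<subseteq> A"
  shows "mset_choose \<mu> \<nu> = (\<Prod>x\<in>A. count \<mu> x choose count \<nu> x)"
  unfolding mset_choose_def
proof (rule prod.mono_neutral_left[OF assms(2,3)], intro ballI)
  fix x assume "x \<in> A - set_mset \<mu>"
  with assms(1) have "count \<nu> x = 0" "count \<mu> x = 0"
    by (auto simp: not_in_iff dest: mset_subset_eq_count[of _ _ x])
  then show "(count \<mu> x choose count \<nu> x) = 1" by simp
qed

lemma mset_choose_add_mset:
  assumes "add_mset x \<nu> \<subseteq># \<mu>"
  shows "mset_choose \<mu> (add_mset x \<nu>) * count (add_mset x \<nu>) x
       = count \<mu> x * mset_choose (\<mu> - {#x#}) \<nu>"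
proof -
  define P where "P = (\<Prod>y\<in>set_mset \<mu> - {x}. count \<mu> y choose count \<nu> y)"
  have x: "x \<in> set_mset \<mu>" using assms by (meson mset_subset_eqD union_single_eq_member)
  have sub: "\<nu> \<subseteq># \<mu> - {#x#}" using assms x by (simp add: insert_subset_eq_iff)
  have set_diff: "set_mset (\<mu> - {#x#}) \<subseteq> set_mset \<mu>" by (meson in_diffD subsetI)
  have choose_diff: "mset_choose (\<mu> - {#x#}) \<nu> = (count \<mu> x - 1 choose count \<nu> x) * P"
    unfolding mset_choose_conv_prod[OF sub finite_set_mset set_diff]
      prod.remove[OF finite_set_mset x] P_def
    by (auto intro!: prod.cong split: if_splits)
  have choose_add: "mset_choose \<mu> (add_mset x \<nu>) = (count \<mu> x choose Suc (count \<nu> x)) * P"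
    unfolding mset_choose_def prod.remove[OF finite_set_mset x] P_def
    by (auto intro!: prod.cong split: if_splits)
  have "mset_choose \<mu> (add_mset x \<nu>) * count (add_mset x \<nu>) x
      = ((count \<mu> x choose Suc (count \<nu> x)) * Suc (count \<nu> x)) * P"
    by (simp add: choose_add ac_simps)
  also have "\<dots> = count \<mu> x * (count \<mu> x - 1 choose count \<nu> x) * P"
    using times_binomial_minus1_eq[of "Suc (count \<nu> x)" "count \<mu> x"] by (simp add: mult.commute)
  also have "\<dots> = count \<mu> x * mset_choose (\<mu> - {#x#}) \<nu>"
    by (simp add: choose_diff)
  finally show ?thesis .
qed

lemma sum_submultisets_containing:
  fixes G :: "'a multiset \<Rightarrow> 'b :: comm_semiring_1"
  assumes x: "x \<in># \<mu>"
  shows "(\<Sum>\<nu>\<in>{\<nu>. \<nu> \<subseteq># \<mu>}. of_nat (mset_choose \<mu> \<nu> * count \<nu> x) * G \<nu>)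
       = of_nat (count \<mu> x) *
         (\<Sum>\<nu>\<in>{\<nu>. \<nu> \<subseteq># \<mu> - {#x#}}. of_nat (mset_choose (\<mu> - {#x#}) \<nu>) * G (add_mset x \<nu>))"
proof -
  have containing: "{\<nu>. \<nu> \<subseteq># \<mu> \<and> x \<in># \<nu>} = add_mset x ` {\<nu>. \<nu> \<subseteq># \<mu> - {#x#}}"
  proof (intro subset_antisym subsetI)
    fix \<nu> assume "\<nu> \<in> {\<nu>. \<nu> \<subseteq># \<mu> \<and> x \<in># \<nu>}"
    then have "\<nu> - {#x#} \<subseteq># \<mu> - {#x#}" "\<nu> = add_mset x (\<nu> - {#x#})"
      using x by (auto simp: subset_eq_diff_conv insert_DiffM)
    then show "\<nu> \<in> add_mset x ` {\<nu>. \<nu> \<subseteq># \<mu> - {#x#}}" by blast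
  qed (use x in \<open>auto simp: insert_subset_eq_iff\<close>)
  have "(\<Sum>\<nu>\<in>{\<nu>. \<nu> \<subseteq># \<mu>}. of_nat (mset_choose \<mu> \<nu> * count \<nu> x) * G \<nu>)
      = (\<Sum>\<nu>\<in>{\<nu>. \<nu> \<subseteq># \<mu> \<and> x \<in># \<nu>}. of_nat (mset_choose \<mu> \<nu> * count \<nu> x) * G \<nu>)"
    by (rule sum.mono_neutral_right) (auto simp: finite_submultisets not_in_iff)
  also have "\<dots> = (\<Sum>\<nu>\<in>{\<nu>. \<nu> \<subseteq># \<mu> - {#x#}}.
      of_nat (mset_choose \<mu> (add_mset x \<nu>) * count (add_mset x \<nu>) x) * G (add_mset x \<nu>))"
    unfolding containing by (subst sum.reindex) (auto simp: inj_on_def simp del: count_add_mset)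
  also have "\<dots> = (\<Sum>\<nu>\<in>{\<nu>. \<nu> \<subseteq># \<mu> - {#x#}}.
      of_nat (count \<mu> x) * (of_nat (mset_choose (\<mu> - {#x#}) \<nu>) * G (add_mset x \<nu>)))"
  proof (intro sum.cong refl)
    fix \<nu> assume "\<nu> \<in> {\<nu>. \<nu> \<subseteq># \<mu> - {#x#}}"
    then have "add_mset x \<nu> \<subseteq># \<mu>" using x by (simp add: insert_subset_eq_iff)
    then show "of_nat (mset_choose \<mu> (add_mset x \<nu>) * count (add_mset x \<nu>) x) * G (add_mset x \<nu>)
        = of_nat (count \<mu> x) * (of_nat (mset_choose (\<mu> - {#x#}) \<nu>) * G (add_mset x \<nu>))"
      by (simp only: mset_choose_add_mset of_nat_mult mult.assoc)
  qed
  finally show ?thesis by (simp add: sum_distrib_left)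
qed

lemma zee_pos: "0 \<notin># \<mu> \<Longrightarrow> zee \<mu> > 0"
  unfolding zee_def by (rule prod_pos) (auto intro: gr0I)

lemma zee_conv_prod:
  assumes "finite A" "set_mset \<mu> \<subseteq> A"
  shows "zee \<mu> = (\<Prod>i\<in>A. fact (count \<mu> i) * i ^ count \<mu> i)"
  unfolding zee_def by (rule prod.mono_neutral_left[OF assms]) (auto simp: not_in_iff)

lemma zee_mult_mset_choose:
  assumes "\<nu> \<subseteq># \<mu>"
  shows "zee \<nu> * zee (\<mu> - \<nu>) * mset_choose \<mu> \<nu> = zee \<mu>"
proof -
  have le: "count \<nu> i \<le> count \<mu> i" for i
    using assms by (simp add: mset_subset_eq_count)
  have "set_mset \<nu> \<subseteq> set_mset \<mu>" "set_mset (\<mu> - \<nu>) \<subseteq> set_mset \<mu>"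
    using assms by (auto simp: set_mset_mono dest: in_diffD)
  then have "zee \<nu> * zee (\<mu> - \<nu>) * mset_choose \<mu> \<nu>
      = (\<Prod>i\<in>set_mset \<mu>.
           fact (count \<nu> i) * fact (count \<mu> i - count \<nu> i) * (count \<mu> i choose count \<nu> i)
           * (i ^ count \<nu> i * i ^ (count \<mu> i - count \<nu> i)))"
    by (simp add: zee_conv_prod[of "set_mset \<mu>"] mset_choose_def prod.distrib[symmetric] ac_simps)
  also have "\<dots> = zee \<mu>"
    unfolding zee_def using le by (intro prod.cong refl) (simp add: binomial_fact_lemma power_add[symmetric])
  finally show ?thesis .
qed

definition abel_poly :: "nat multiset \<Rightarrow> real \<Rightarrow> real" where
  "abel_poly \<nu> a =
     (if \<nu> = {#} then 1 else a * pochhammer (a + real (sum_mset \<nu>) + 1) (size \<nu> - 1))"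

lemma abel_poly_0: "abel_poly \<nu> 0 = (if \<nu> = {#} then 1 else 0)"
  by (simp add: abel_poly_def)

lemma abel_poly_difference:
  "abel_poly \<nu> (a + 1) - abel_poly \<nu> a
     = (\<Sum>x\<in>set_mset \<nu>. real (count \<nu> x) * abel_poly (\<nu> - {#x#}) (a + real x + 1))"
proof (cases "size \<nu> \<le> 1")
  case True
  then consider "\<nu> = {#}" | x where "\<nu> = {#x#}"
    by (metis le_Suc_eq le_zero_eq size_1_singleton_mset size_eq_0_iff_empty One_nat_def)
  then show ?thesis by cases (simp_all add: abel_poly_def)
next
  case False
  define n where "n = sum_mset \<nu>"
  define l where "l = size \<nu>"
  define P where "P = pochhammer (a + real n + 2) (l - 2)"
  have l: "l - 1 = Suc (l - 2)" "real (l - 2) = real l - 2" and "\<nu> \<noteq> {#}"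
    using False by (auto simp: l_def)
  have poch_shift: "pochhammer (a + 1 + real n + 1) (l - 1) = P * (a + real n + real l)"
    unfolding l(1) pochhammer_Suc P_def by (simp add: l(2) algebra_simps)
  have poch: "pochhammer (a + real n + 1) (l - 1) = (a + real n + 1) * P"
    unfolding l(1) pochhammer_rec P_def by (simp add: algebra_simps)
  have "abel_poly (\<nu> - {#x#}) (a + real x + 1) = (a + real x + 1) * P" if "x \<in># \<nu>" for x
  proof -
    have "size (\<nu> - {#x#}) = Suc (l - 2)"
      using that False by (auto simp: l_def size_Diff_singleton)
    moreover from this have "\<nu> - {#x#} \<noteq> {#}" by auto
    moreover have "real (sum_mset (\<nu> - {#x#})) = real n - real x"
      using that by (simp add: n_def sum_mset.remove)
    ultimately show ?thesis by (simp add: abel_poly_def P_def algebra_simps)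
  qed
  then have "(\<Sum>x\<in>set_mset \<nu>. real (count \<nu> x) * abel_poly (\<nu> - {#x#}) (a + real x + 1))
      = (\<Sum>x\<in>#\<nu>. a + real x + 1) * P"
    by (simp add: sum_mset_conv_sum_count sum_distrib_right mult.assoc)
  also have "(\<Sum>x\<in>#\<nu>. a + real x + 1) = real l * (a + 1) + real n"
    unfolding l_def n_def by (induction \<nu>) (auto simp: algebra_simps)
  also have "(real l * (a + 1) + real n) * P = abel_poly \<nu> (a + 1) - abel_poly \<nu> a"
    unfolding abel_poly_def if_not_P[OF \<open>\<nu> \<noteq> {#}\<close>] n_def[symmetric] l_def[symmetric] poch poch_shift
    by (simp add: algebra_simps)
  finally show ?thesis ..
qed

definition abel_convolution :: "nat multiset \<Rightarrow> real \<Rightarrow> real \<Rightarrow> real" where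
  "abel_convolution \<mu> a b =
     (\<Sum>\<nu>\<in>{\<nu>. \<nu> \<subseteq># \<mu>}. real (mset_choose \<mu> \<nu>) * abel_poly \<nu> a * abel_poly (\<mu> - \<nu>) b)"

lemma abel_convolution_0: "abel_convolution \<mu> 0 b = abel_poly \<mu> b"
proof -
  have "abel_convolution \<mu> 0 b = (\<Sum>\<nu>\<in>{\<nu>. \<nu> \<subseteq># \<mu>}. if \<nu> = {#} then abel_poly \<mu> b else 0)"
    unfolding abel_convolution_def by (intro sum.cong refl) (simp add: abel_poly_0)
  then show ?thesis by (simp add: finite_submultisets)
qed

lemma abel_convolution_difference:
  assumes smaller: "\<And>x. x \<in># \<mu> \<Longrightarrow>
    abel_convolution (\<mu> - {#x#}) (a + real x + 1) b = abel_poly (\<mu> - {#x#}) (a + real x + 1 + b)"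
  shows "abel_convolution \<mu> (a + 1) b - abel_convolution \<mu> a b
       = abel_poly \<mu> (a + b + 1) - abel_poly \<mu> (a + b)"
proof -
  let ?G = "\<lambda>x \<nu>. abel_poly (\<nu> - {#x#}) (a + real x + 1) * abel_poly (\<mu> - \<nu>) b"
  have "abel_convolution \<mu> (a + 1) b - abel_convolution \<mu> a b
      = (\<Sum>\<nu>\<in>{\<nu>. \<nu> \<subseteq># \<mu>}. real (mset_choose \<mu> \<nu>)
           * (abel_poly \<nu> (a + 1) - abel_poly \<nu> a) * abel_poly (\<mu> - \<nu>) b)"
    unfolding abel_convolution_def by (simp add: sum_subtractf[symmetric] algebra_simps)
  also have "\<dots> = (\<Sum>\<nu>\<in>{\<nu>. \<nu> \<subseteq># \<mu>}. \<Sum>x\<in>set_mset \<mu>. real (mset_choose \<mu> \<nu> * count \<nu> x) * ?G x \<nu>)"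
  proof (intro sum.cong refl)
    fix \<nu> assume "\<nu> \<in> {\<nu>. \<nu> \<subseteq># \<mu>}"
    then have "set_mset \<nu> \<subseteq> set_mset \<mu>" by (simp add: set_mset_mono)
    then have extend: "(\<Sum>x\<in>set_mset \<nu>. real (count \<nu> x) * abel_poly (\<nu> - {#x#}) (a + real x + 1))
        = (\<Sum>x\<in>set_mset \<mu>. real (count \<nu> x) * abel_poly (\<nu> - {#x#}) (a + real x + 1))"
      by (intro sum.mono_neutral_left) (auto simp: not_in_iff)
    show "real (mset_choose \<mu> \<nu>) * (abel_poly \<nu> (a + 1) - abel_poly \<nu> a) * abel_poly (\<mu> - \<nu>) b
        = (\<Sum>x\<in>set_mset \<mu>. real (mset_choose \<mu> \<nu> * count \<nu> x) * ?G x \<nu>)"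
      unfolding abel_poly_difference extend by (simp add: sum_distrib_left sum_distrib_right algebra_simps)
  qed
  also have "\<dots> = (\<Sum>x\<in>set_mset \<mu>. \<Sum>\<nu>\<in>{\<nu>. \<nu> \<subseteq># \<mu>}. real (mset_choose \<mu> \<nu> * count \<nu> x) * ?G x \<nu>)"
    by (rule sum.swap)
  also have "\<dots> = (\<Sum>x\<in>set_mset \<mu>. real (count \<mu> x) * abel_convolution (\<mu> - {#x#}) (a + real x + 1) b)"
  proof (intro sum.cong refl)
    fix x assume "x \<in> set_mset \<mu>"
    from sum_submultisets_containing[OF this, of "?G x"]
    show "(\<Sum>\<nu>\<in>{\<nu>. \<nu> \<subseteq># \<mu>}. real (mset_choose \<mu> \<nu> * count \<nu> x) * ?G x \<nu>)
        = real (count \<mu> x) * abel_convolution (\<mu> - {#x#}) (a + real x + 1) b"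
      by (simp add: abel_convolution_def mult.assoc diff_diff_add)
  qed
  also have "\<dots> = (\<Sum>x\<in>set_mset \<mu>. real (count \<mu> x) * abel_poly (\<mu> - {#x#}) (a + b + real x + 1))"
  proof (intro sum.cong refl)
    fix x assume x: "x \<in> set_mset \<mu>"
    show "real (count \<mu> x) * abel_convolution (\<mu> - {#x#}) (a + real x + 1) b
        = real (count \<mu> x) * abel_poly (\<mu> - {#x#}) (a + b + real x + 1)"
      unfolding smaller[OF x] by (simp add: add_ac)
  qed
  also have "\<dots> = abel_poly \<mu> (a + b + 1) - abel_poly \<mu> (a + b)"
    by (rule abel_poly_difference[symmetric])
  finally show ?thesis .
qed

lemma abel_convolution: "abel_convolution \<mu> (of_int a) b = abel_poly \<mu> (of_int a + b)"
proof (induction "size \<mu>" arbitrary: \<mu> a b rule: less_induct)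
  case less
  have smaller: "abel_convolution (\<mu> - {#x#}) (of_int i + real x + 1) b
      = abel_poly (\<mu> - {#x#}) (of_int i + real x + 1 + b)" if "x \<in># \<mu>" for x i
    using less[of "\<mu> - {#x#}" "i + int x + 1" b] that by (simp add: size_Diff1_less)
  show ?case
  proof (induction a rule: int_induct[where k = 0])
    case base
    then show ?case by (simp add: abel_convolution_0)
  next
    case (step1 i)
    then show ?case
      using abel_convolution_difference[of \<mu> "of_int i" b] smaller by (simp add: algebra_simps)
  next
    case (step2 i)
    then show ?case
      using abel_convolution_difference[of \<mu> "of_int (i - 1)" b] smaller[of _ "i - 1"] by (simp add: algebra_simps)
  qed
qed

definition rising_weight :: "nat multiset \<Rightarrow> real" where
  "rising_weight \<nu> = (if \<nu> = {#} then 0 else pochhammer (real (sum_mset \<nu>)) (size \<nu> - 1))"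

lemma rising_weight_empty [simp]: "rising_weight {#} = 0"
  by (simp add: rising_weight_def)

lemma abel_poly_minus_one: "abel_poly \<nu> (-1) = (if \<nu> = {#} then 1 else - rising_weight \<nu>)"
  by (simp add: abel_poly_def rising_weight_def)

lemma rising_weight_convolution:
  assumes "\<mu> \<noteq> {#}"
  shows "(\<Sum>\<nu>\<in>{\<nu>. \<nu> \<subseteq># \<mu>}. real (mset_choose \<mu> \<nu>) * rising_weight \<nu> * rising_weight (\<mu> - \<nu>))
       = abel_poly \<mu> (-2) + 2 * rising_weight \<mu>"
proof -
  have weight_term: "real (mset_choose \<mu> \<nu>) * rising_weight \<nu> * rising_weight (\<mu> - \<nu>)
      = real (mset_choose \<mu> \<nu>) * abel_poly \<nu> (-1) * abel_poly (\<mu> - \<nu>) (-1)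
        + ((if \<nu> = {#} then rising_weight \<mu> else 0) + (if \<nu> = \<mu> then rising_weight \<mu> else 0))"
    if sub: "\<nu> \<subseteq># \<mu>" for \<nu>
  proof -
    consider "\<nu> = {#}" | "\<nu> = \<mu>" | "\<nu> \<noteq> {#}" "\<nu> \<noteq> \<mu>" "\<mu> - \<nu> \<noteq> {#}"
      using sub Diff_eq_empty_iff_mset subset_mset.antisym by blast
    then show ?thesis
      using assms by cases (simp_all add: abel_poly_minus_one)
  qed
  have "(\<Sum>\<nu>\<in>{\<nu>. \<nu> \<subseteq># \<mu>}. real (mset_choose \<mu> \<nu>) * rising_weight \<nu> * rising_weight (\<mu> - \<nu>))
      = abel_convolution \<mu> (-1) (-1) + 2 * rising_weight \<mu>"
    by (simp add: weight_term sum.distrib finite_submultisets abel_convolution_def)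
  also have "abel_convolution \<mu> (-1) (-1) = abel_poly \<mu> (-2)"
    using abel_convolution[of \<mu> "-1" "-1"] by simp
  finally show ?thesis .
qed

lemma abel_poly_minus_two_add_rising_weight:
  assumes "size \<mu> \<ge> 2"
  shows "abel_poly \<mu> (-2) + 2 * rising_weight \<mu>
       = 2 * real (size \<mu> - 1) * pochhammer (real (sum_mset \<mu>)) (size \<mu> - 2)"
proof -
  define n where "n = real (sum_mset \<mu>)"
  define P where "P = pochhammer n (size \<mu> - 2)"
  have l: "size \<mu> - 1 = Suc (size \<mu> - 2)" "real (size \<mu> - 1) = real (size \<mu> - 2) + 1"
    and "\<mu> \<noteq> {#}"
    using assms by auto
  have "abel_poly \<mu> (-2) = -2 * ((n - 1) * P)"
    unfolding abel_poly_def if_not_P[OF \<open>\<mu> \<noteq> {#}\<close>] l(1) pochhammer_rec P_def n_def[symmetric]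
    by (simp add: algebra_simps)
  moreover have "rising_weight \<mu> = P * (n + real (size \<mu> - 2))"
    unfolding rising_weight_def if_not_P[OF \<open>\<mu> \<noteq> {#}\<close>] l(1) pochhammer_Suc P_def n_def ..
  ultimately show ?thesis
    unfolding P_def[symmetric] n_def[symmetric] l(2) by (simp add: algebra_simps)
qed

lemma fact_conv_pochhammer:
  assumes "n > 0"
  shows "fact (n + k - 1) = fact (n - 1) * pochhammer (of_nat n) k"
proof -
  obtain m where "n = Suc m" using assms gr0_implies_Suc by blast
  then show ?thesis
    unfolding pochhammer_fact using pochhammer_product'[of 1 m k] by (simp add: add.commute)
qed

lemma mps_mult_eq_0:
  assumes f: "\<And>\<nu>. f \<nu> \<noteq> 0 \<Longrightarrow> is_partition \<nu> \<and> \<nu> \<noteq> {#}"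
    and g: "\<And>\<nu>. g \<nu> \<noteq> 0 \<Longrightarrow> is_partition \<nu> \<and> \<nu> \<noteq> {#}"
    and \<mu>: "\<not> (is_partition \<mu> \<and> plen \<mu> \<ge> 2)"
  shows "mps_mult f g \<mu> = 0"
  unfolding mps_mult_def
proof (intro sum.neutral ballI)
  fix \<nu> assume "\<nu> \<in> {\<nu>. \<nu> \<subseteq># \<mu>}"
  then have split: "\<mu> = \<nu> + (\<mu> - \<nu>)" by simp
  show "f \<nu> * g (\<mu> - \<nu>) = 0"
  proof (rule ccontr)
    assume "f \<nu> * g (\<mu> - \<nu>) \<noteq> 0"
    then have "is_partition \<nu>" "\<nu> \<noteq> {#}" "is_partition (\<mu> - \<nu>)" "\<mu> - \<nu> \<noteq> {#}"
      using f g by auto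
    then have "is_partition \<mu> \<and> plen \<mu> \<ge> 2"
      by (subst (1 2) split) (auto simp: is_partition_def plen_def Suc_le_eq nonempty_has_size)
    with \<mu> show False ..
  qed
qed

lemma mps_mult_zee_weights:
  assumes "0 \<notin># \<mu>"
    and f: "\<And>\<nu>. \<nu> \<subseteq># \<mu> \<Longrightarrow> f \<nu> = u \<nu> / real (zee \<nu>)"
    and g: "\<And>\<nu>. \<nu> \<subseteq># \<mu> \<Longrightarrow> g \<nu> = v \<nu> / real (zee \<nu>)"
  shows "mps_mult f g \<mu> = (\<Sum>\<nu>\<in>{\<nu>. \<nu> \<subseteq># \<mu>}. real (mset_choose \<mu> \<nu>) * u \<nu> * v (\<mu> - \<nu>)) / real (zee \<mu>)"
  unfolding mps_mult_def sum_divide_distrib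
proof (intro sum.cong refl)
  fix \<nu> assume "\<nu> \<in> {\<nu>. \<nu> \<subseteq># \<mu>}"
  then have sub: "\<nu> \<subseteq># \<mu>" "\<mu> - \<nu> \<subseteq># \<mu>" by auto
  then have "real (zee \<nu>) > 0" "real (zee (\<mu> - \<nu>)) > 0" "real (mset_choose \<mu> \<nu>) > 0"
    using zee_pos[OF \<open>0 \<notin># \<mu>\<close>] zee_mult_mset_choose[OF sub(1)] \<open>0 \<notin># \<mu>\<close>
    by (auto intro!: zee_pos dest: mset_subset_eqD in_diffD)
  then show "f \<nu> * g (\<mu> - \<nu>) = real (mset_choose \<mu> \<nu>) * u \<nu> * v (\<mu> - \<nu>) / real (zee \<mu>)"
    unfolding f[OF sub(1)] g[OF sub(2)] zee_mult_mset_choose[OF sub(1), symmetric] by (simp add: field_simps)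
qed

lemma partition_coeff_eq_rising_weight:
  assumes "0 \<notin># \<nu>"
  shows "(if is_partition \<nu> \<and> \<nu> \<noteq> {#}
          then fact (psize \<nu> + plen \<nu> - 2) / (fact (psize \<nu> - 1) * real (zee \<nu>)) else 0)
       = rising_weight \<nu> / real (zee \<nu>)"
proof (cases "\<nu> = {#}")
  case False
  then have "fact (sum_mset \<nu> + size \<nu> - 2) = fact (sum_mset \<nu> - 1) * rising_weight \<nu>"
    using fact_conv_pochhammer[OF sum_mset_pos[OF assms False], of "size \<nu> - 1"]
    by (simp add: rising_weight_def nonempty_has_size Suc_le_eq numeral_2_eq_2)
  with False assms show ?thesis by (simp add: is_partition_def psize_def plen_def)
qed simp

lemma mps_mult_rising_weights:
  assumes "is_partition \<mu>" "plen \<mu> \<ge> 2"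
    and f: "\<And>\<nu>. \<nu> \<subseteq># \<mu> \<Longrightarrow> f \<nu> = rising_weight \<nu> / real (zee \<nu>)"
  shows "1/2 * mps_mult f f \<mu>
       = fact (psize \<mu> + plen \<mu> - 3) * real (plen \<mu> - 1) / (fact (psize \<mu> - 1) * real (zee \<mu>))"
proof -
  have \<mu>: "0 \<notin># \<mu>" "size \<mu> \<ge> 2" "\<mu> \<noteq> {#}" "sum_mset \<mu> > 0"
    using assms(1,2) by (auto simp: is_partition_def plen_def intro!: sum_mset_pos)
  define P where "P = pochhammer (real (sum_mset \<mu>)) (size \<mu> - 2)"
  have "mps_mult f f \<mu> = (abel_poly \<mu> (-2) + 2 * rising_weight \<mu>) / real (zee \<mu>)"
    using \<mu> by (simp add: mps_mult_zee_weights[OF \<mu>(1) f f] rising_weight_convolution)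
  also have "\<dots> = 2 * real (plen \<mu> - 1) * P / real (zee \<mu>)"
    using \<mu> by (simp add: abel_poly_minus_two_add_rising_weight P_def plen_def)
  finally have "1/2 * mps_mult f f \<mu> = real (plen \<mu> - 1) * P / real (zee \<mu>)" by simp
  moreover have "fact (psize \<mu> + plen \<mu> - 3) = fact (psize \<mu> - 1) * P"
    using \<mu> fact_conv_pochhammer[of "sum_mset \<mu>" "size \<mu> - 2"]
    by (simp add: P_def psize_def plen_def)
  ultimately show ?thesis by simp
qed

theorem propositionA3:
  shows "(\<lambda>\<mu>. if is_partition \<mu> \<and> plen \<mu> \<ge> 2
             then fact (psize \<mu> + plen \<mu> - 3) * real (plen \<mu> - 1)
                  / (fact (psize \<mu> - 1) * real (zee \<mu>))
             else 0)
       = (\<lambda>\<mu>. 1/2 * mps_mult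
              (\<lambda>\<nu>. if is_partition \<nu> \<and> \<nu> \<noteq> {#}
                    then fact (psize \<nu> + plen \<nu> - 2) / (fact (psize \<nu> - 1) * real (zee \<nu>))
                    else 0)
              (\<lambda>\<nu>. if is_partition \<nu> \<and> \<nu> \<noteq> {#}
                    then fact (psize \<nu> + plen \<nu> - 2) / (fact (psize \<nu> - 1) * real (zee \<nu>))
                    else 0) \<mu>)"
proof (rule ext)
  fix \<mu> :: "nat multiset"
  define A where "A \<nu> = (if is_partition \<nu> \<and> \<nu> \<noteq> {#}
      then fact (psize \<nu> + plen \<nu> - 2) / (fact (psize \<nu> - 1) * real (zee \<nu>)) else 0)" for \<nu>
  show "(if is_partition \<mu> \<and> plen \<mu> \<ge> 2
        then fact (psize \<mu> + plen \<mu> - 3) * real (plen \<mu> - 1) / (fact (psize \<mu> - 1) * real (zee \<mu>))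
        else 0) = 1/2 * mps_mult A A \<mu>"
  proof (cases "is_partition \<mu> \<and> plen \<mu> \<ge> 2")
    case False
    then have "mps_mult A A \<mu> = 0"
      by (intro mps_mult_eq_0) (auto simp: A_def split: if_splits)
    then show ?thesis unfolding if_not_P[OF False] by simp
  next
    case True
    then have "A \<nu> = rising_weight \<nu> / real (zee \<nu>)" if "\<nu> \<subseteq># \<mu>" for \<nu>
      unfolding A_def using that
      by (intro partition_coeff_eq_rising_weight) (auto simp: is_partition_def dest: mset_subset_eqD)
    with True show ?thesis
      unfolding if_P[OF True] by (intro mps_mult_rising_weights[symmetric]) auto
  qed
qed

end
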